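(* Suppose that $\psi$ is an orthonormal differentiable wavelet such that $\psi$ and $\psi'$ have a common radial decreasing $L^1$-majorant $W$ satisfying $\int_0^\infty sW(s)\,ds<\infty$. Then the family $\{K_\varepsilon\}_{\varepsilon\in\mathcal{E}}$, $K_\varepsilon(x,y)=\sum_{j,k\in\mathbb{Z}}\varepsilon_{j,k}\psi_{j,k}(x)\overline{\psi_{j,k}(y)}$, is a uniform in $\mathcal{E}$ family of standard kernels, with constants $C_1,C_2,C_3$ depending only on $W$.
   Context: A function $\psi\in L^2(\mathbb{R})$ is an orthonormal wavelet if $\psi_{j,k}(x)=2^{j/2}\psi(2^jx-k)$, $j,k\in\mathbb{Z}$, form an orthonormal basis of $L^2(\mathbb{R})$. A function $W:[0,\infty)\to(0,\infty)$ is a radial decreasing $L^1$-majorant of $g$ if $|g(x)|\le W(|x|)$ a.e., $W\in L^1([0,\infty))$, $W$ is decreasing and $W(0)<\infty$. $\mathcal{E}$ is the set of all sequences $\varepsilon=\{\varepsilon_{j,k}\}_{j,k\in\mathbb{Z}}$ with $\varepsilon_{j,k}\in\{-1,1\}$. A family $\{K_\omega\}_{\omega\in\Omega}$ of functions on $\mathbb{R}^2\setminus\{(x,x)\}$ is a uniform in $\Omega$ family of standard kernels if there exist $C_1,C_2,C_3\in(0,\infty)$ such that for all $\omega$ and all off-diagonal pairs: $|K_\omega(x,y)|\le C_1/|x-y|$; $|K_\omega(z,y)-K_\omega(x,y)|\le C_2|z-x|/|x-y|^2$ if $|z-x|\le\frac12|x-y|$; $|K_\omega(x,w)-K_\omega(x,y)|\le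 C_3|w-y|/|x-y|^2$ if $|w-y|\le\frac12|x-y|$. *)

theory Defs
  imports "HOL-Analysis.Analysis"
begin

definition L2 :: "(real \<Rightarrow> complex) \<Rightarrow> bool" where
  "L2 f \<longleftrightarrow> f \<in> borel_measurable lborel \<and> integrable lborel (\<lambda>x. (cmod (f x))\<^sup>2)"

definition L2_inner :: "(real \<Rightarrow> complex) \<Rightarrow> (real \<Rightarrow> complex) \<Rightarrow> complex" where
  "L2_inner f g = (LINT x|lborel. f x * cnj (g x))"

definition wav :: "(real \<Rightarrow> complex) \<Rightarrow> int \<Rightarrow> int \<Rightarrow> real \<Rightarrow> complex" where
  "wav \<psi> j k x = complex_of_real (2 powr (real_of_int j / 2)) * \<psi> (2 powr (real_of_int j) * x - real_of_int k)"

definition orthonormal_wavelet :: "(real \<Rightarrow> complex) \<Rightarrow> bool" where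
  "orthonormal_wavelet \<psi> \<longleftrightarrow>
     L2 \<psi> \<and>
     (\<forall>j k j' k'. L2_inner (wav \<psi> j k) (wav \<psi> j' k') = (if (j, k) = (j', k') then 1 else 0)) \<and>
     (\<forall>f. L2 f \<and> (\<forall>j k. L2_inner f (wav \<psi> j k) = 0) \<longrightarrow> (AE x in lborel. f x = 0))"

definition radial_decr_L1_majorant :: "(real \<Rightarrow> real) \<Rightarrow> (real \<Rightarrow> complex) \<Rightarrow> bool" where
  "radial_decr_L1_majorant W g \<longleftrightarrow>
     (\<forall>s\<ge>0. W s > 0) \<and> set_integrable lborel {0..} W \<and> antimono_on {0..} W \<and>
     (AE x in lborel. cmod (g x) \<le> W \<bar>x\<bar>)"

definition wav_kernel :: "(real \<Rightarrow> complex) \<Rightarrow> (int \<Rightarrow> int \<Rightarrow> real) \<Rightarrow> real \<Rightarrow> real \<Rightarrow> complex" where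
  "wav_kernel \<psi> \<epsilon> x y =
     (\<Sum>\<^sub>\<infinity>(j, k)\<in>UNIV. complex_of_real (\<epsilon> j k) * wav \<psi> j k x * cnj (wav \<psi> j k y))"

definition standard_kernel_with :: "real \<Rightarrow> real \<Rightarrow> real \<Rightarrow> (real \<Rightarrow> real \<Rightarrow> complex) \<Rightarrow> bool" where
  "standard_kernel_with C1 C2 C3 K \<longleftrightarrow>
     (\<forall>x y. x \<noteq> y \<longrightarrow> cmod (K x y) \<le> C1 / \<bar>x - y\<bar>) \<and>
     (\<forall>x y z. x \<noteq> y \<and> \<bar>z - x\<bar> \<le> \<bar>x - y\<bar> / 2 \<longrightarrow>
        cmod (K z y - K x y) \<le> C2 * \<bar>z - x\<bar> / \<bar>x - y\<bar>\<^sup>2) \<and>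
     (\<forall>x y w. x \<noteq> y \<and> \<bar>w - y\<bar> \<le> \<bar>x - y\<bar> / 2 \<longrightarrow>
        cmod (K x w - K x y) \<le> C3 * \<bar>w - y\<bar> / \<bar>x - y\<bar>\<^sup>2)"

end

theory Submission
  imports Defs
begin

(*
  As W bounds psi' almost everywhere, psi and its increments over steps of length at most 1
  are bounded everywhere by the decreasing envelope U(s) = 2 W(max (s - 1) 0), whose lattice
  sums are finite. At scale j, the sum over translates k of U(|2^j x - k|) U(|2^j y - k|) is
  therefore at most a constant times min (U 0) (2 U(2^(j-1) |x - y|)), since one of the two
  factors is taken at distance at least 2^(j-1) |x - y|. Summing 2^j times this over j, the
  scales with 2^j |x - y| <= 4 form a geometric series of size O(1/|x - y|), and at the other
  scales s W(s) <= 2 * integral over [s/2, s] of W telescopes into the integral of W. For the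
  smoothness estimates the increment bound (fine scales) or the triangle inequality (coarse
  scales) produces an extra factor 2^j |z - x|, and the coarse scales telescope through
  s^2 W(s) <= 4 * integral over [s/2, s] of sigma W(sigma) into the first moment of W.
*)

lemma sum_powr_int_le_geometric:
  fixes q c :: real
  assumes q: "1 < q" and fin: "finite J" and c: "0 \<le> c"
    and bound: "\<And>j. j \<in> J \<Longrightarrow> q powr of_int j \<le> c"
  shows "(\<Sum>j\<in>J. q powr of_int j) \<le> c * q / (q - 1)"
proof (cases "J = {}")
  case True
  then show ?thesis using q c by simp
next
  case False
  define j0 where "j0 = Max J"
  have j0: "j0 \<in> J" "\<And>j. j \<in> J \<Longrightarrow> j \<le> j0"
    using fin False by (auto simp: j0_def)
  let ?h = "\<lambda>j. nat (j0 - j)"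
  have inj: "inj_on ?h J"
    by (rule inj_onI) (use j0 in \<open>auto simp: eq_nat_nat_iff\<close>)
  have eq: "q powr of_int j = q powr of_int j0 * (1/q) ^ ?h j" if "j \<in> J" for j
  proof -
    have "q powr of_int j = q powr of_int j0 / q powr of_int (j0 - j)"
      using q by (simp add: powr_diff[symmetric])
    also have "q powr of_int (j0 - j) = q ^ ?h j"
      using q that j0 by (simp add: powr_realpow[symmetric])
    finally show ?thesis by (simp add: power_one_over divide_inverse power_inverse)
  qed
  have "(\<Sum>j\<in>J. q powr of_int j) = q powr of_int j0 * (\<Sum>n\<in>?h ` J. (1/q) ^ n)"
    by (simp add: eq sum_distrib_left sum.reindex[OF inj] cong: sum.cong)
  also have "(\<Sum>n\<in>?h ` J. (1/q) ^ n) \<le> (\<Sum>n. (1/q) ^ n)"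
    by (rule sum_le_suminf) (use q fin in auto)
  also have "(\<Sum>n. (1/q) ^ n) = 1 / (1 - 1/q)"
    by (rule suminf_geometric) (use q in simp)
  also have "\<dots> = q / (q - 1)"
    using q by (simp add: field_simps)
  finally have "(\<Sum>j\<in>J. q powr of_int j) \<le> q powr of_int j0 * (q / (q - 1))"
    using q by (simp add: mult_left_mono)
  also have "\<dots> \<le> c * (q / (q - 1))"
    using bound j0 q by (intro mult_right_mono) auto
  finally show ?thesis by simp
qed

lemma sum_dyadic_powers_le:
  fixes c :: real
  assumes fin: "finite J" and c: "0 \<le> c" and bound: "\<And>j. j \<in> J \<Longrightarrow> 2 powr of_int j \<le> c"
  shows "(\<Sum>j\<in>J. (2 powr of_int j) ^ (n + 1)) \<le> 2 * c ^ (n + 1)"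
proof -
  define q :: real where "q = 2 ^ (n + 1)"
  have q: "2 \<le> q"
    unfolding q_def using one_le_power[of "2::real" n] by simp
  have powr_q: "(2 powr of_int j) ^ (n + 1) = q powr of_int j" for j :: int
  proof -
    have "(2 powr of_int j) ^ (n + 1) = (2 powr real (n + 1)) powr of_int j"
      by (subst powr_realpow[symmetric]) (simp_all add: powr_powr mult.commute)
    then show ?thesis by (simp only: q_def powr_realpow)
  qed
  have "q powr of_int j \<le> c ^ (n + 1)" if "j \<in> J" for j
    unfolding powr_q[symmetric] using bound[OF that] by (intro power_mono) auto
  then have "(\<Sum>j\<in>J. (2 powr of_int j) ^ (n + 1)) \<le> c ^ (n + 1) * q / (q - 1)"
    unfolding powr_q using q fin c by (intro sum_powr_int_le_geometric) auto
  also have "\<dots> \<le> c ^ (n + 1) * 2"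
  proof -
    have "q / (q - 1) \<le> 2" using q by (simp add: field_simps)
    from mult_left_mono[OF this zero_le_power[OF c, of "n + 1"]] show ?thesis by simp
  qed
  finally show ?thesis by simp
qed

lemma sum_dyadic_increments_le:
  fixes G :: "real \<Rightarrow> real"
  assumes mono: "\<And>s t. 0 \<le> s \<Longrightarrow> s \<le> t \<Longrightarrow> G s \<le> G t"
    and nonneg: "\<And>s. 0 \<le> s \<Longrightarrow> 0 \<le> G s"
    and bound: "\<And>s. 0 \<le> s \<Longrightarrow> G s \<le> M"
    and e: "0 < e" and fin: "finite J"
  shows "(\<Sum>j\<in>J. G (2 powr of_int j * e) - G (2 powr of_int j * e / 2)) \<le> M"
proof (cases "J = {}")
  case True
  then show ?thesis using nonneg[of 0] bound[of 0] by simp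
next
  case False
  define m where "m = Min J"
  have m: "\<And>j. j \<in> J \<Longrightarrow> m \<le> j" using fin False by (auto simp: m_def)
  let ?h = "\<lambda>j. nat (j - m)"
  have inj: "inj_on ?h J"
    by (rule inj_onI) (use m in \<open>auto simp: eq_nat_nat_iff\<close>)
  define f where "f i = G (2 powr of_int (m + int i) * e / 2)" for i
  have f_mono: "f i \<le> f (Suc i)" for i
    unfolding f_def using e by (intro mono) (auto intro!: divide_right_mono mult_right_mono)
  have "G (2 powr of_int j * e) - G (2 powr of_int j * e / 2) = f (Suc (?h j)) - f (?h j)"
    if "j \<in> J" for j
  proof -
    have jm: "m + int (?h j) = j" using m that by auto
    then have "2 powr of_int (m + int (Suc (?h j))) * e / 2 = 2 powr of_int j * e"
      by (simp add: powr_add algebra_simps)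
    then have "f (Suc (?h j)) = G (2 powr of_int j * e)"
      unfolding f_def by (rule arg_cong)
    moreover have "f (?h j) = G (2 powr of_int j * e / 2)"
      unfolding f_def jm ..
    ultimately show ?thesis by simp
  qed
  then have "(\<Sum>j\<in>J. G (2 powr of_int j * e) - G (2 powr of_int j * e / 2))
      = (\<Sum>i\<in>?h ` J. f (Suc i) - f i)"
    by (simp add: sum.reindex[OF inj])
  also have "\<dots> \<le> (\<Sum>i<Suc (Max (?h ` J)). f (Suc i) - f i)"
    by (rule sum_mono2) (use fin f_mono in \<open>auto simp: less_Suc_eq_le\<close>)
  also have "\<dots> = f (Suc (Max (?h ` J))) - f 0"
    by (rule sum_lessThan_telescope)
  also have "\<dots> \<le> M"
    unfolding f_def using e bound nonneg
    by (smt (verit) divide_nonneg_pos mult_nonneg_nonneg powr_ge_zero)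
  finally show ?thesis .
qed

lemma norm_infsum_le_iterated_sums:
  fixes g :: "'a \<times> 'b \<Rightarrow> 'c::banach"
  assumes inner: "\<And>j K. finite K \<Longrightarrow> (\<Sum>k\<in>K. norm (g (j, k))) \<le> b j"
    and outer: "\<And>J. finite J \<Longrightarrow> (\<Sum>j\<in>J. b j) \<le> B"
  shows "g summable_on UNIV" "norm (infsum g UNIV) \<le> B"
proof -
  have finite_sums: "(\<Sum>p\<in>F. norm (g p)) \<le> B" if F: "finite F" for F
  proof -
    have "(\<Sum>p\<in>F. norm (g p)) \<le> (\<Sum>p\<in>fst ` F \<times> snd ` F. norm (g p))"
      by (rule sum_mono2) (use F in \<open>force simp: image_iff\<close>)+
    also have "\<dots> = (\<Sum>j\<in>fst ` F. \<Sum>k\<in>snd ` F. norm (g (j, k)))"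
      by (simp add: sum.cartesian_product case_prod_unfold)
    also have "\<dots> \<le> (\<Sum>j\<in>fst ` F. b j)"
      by (rule sum_mono, rule inner) (use F in auto)
    also have "\<dots> \<le> B"
      by (rule outer) (use F in auto)
    finally show ?thesis .
  qed
  have abs: "(\<lambda>p. norm (g p)) summable_on UNIV"
    by (rule nonneg_bdd_above_summable_on) (use finite_sums in \<open>auto intro!: bdd_aboveI[where M=B]\<close>)
  then show "g summable_on UNIV"
    by (rule abs_summable_summable)
  have "norm (infsum g UNIV) \<le> infsum (\<lambda>p. norm (g p)) UNIV"
    by (rule norm_infsum_bound) (use abs in simp)
  also have "\<dots> \<le> B"
    by (rule infsum_le_finite_sums[OF abs]) (use finite_sums in auto)
  finally show "norm (infsum g UNIV) \<le> B" .
qed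

lemma infsum_diff:
  fixes f g :: "'a \<Rightarrow> 'b::{topological_ab_group_add, t2_space}"
  assumes "f summable_on A" "g summable_on A"
  shows "infsum (\<lambda>x. f x - g x) A = infsum f A - infsum g A"
  using infsum_add[OF assms(1), of "\<lambda>x. - g x"] assms(2)
  by (simp add: summable_on_uminus infsum_uminus)

lemma AE_lborel_negligibleE:
  assumes "AE x in lborel. P x"
  obtains N where "negligible N" "\<And>x. x \<notin> N \<Longrightarrow> P x"
proof -
  have "AE x in lebesgue. P x" using assms by (rule AE_completion)
  then show ?thesis
    using that unfolding eventually_ae_filter_negligible by blast
qed

lemma norm_increment_le_ae_deriv_bound:
  fixes f f' :: "real \<Rightarrow> 'a::banach"
  assumes ab: "a \<le> b" and B: "0 \<le> B"
    and deriv: "\<And>x. x \<in> {a..b} \<Longrightarrow> (f has_vector_derivative f' x) (at x within {a..b})"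
    and N: "negligible N"
    and bound: "\<And>x. x \<in> {a..b} \<Longrightarrow> x \<notin> N \<Longrightarrow> norm (f' x) \<le> B"
  shows "norm (f b - f a) \<le> B * (b - a)"
proof -
  define g where "g x = (if x \<in> N then 0 else f' x)" for x
  have "(f' has_integral f b - f a) {a..b}"
    by (rule fundamental_theorem_of_calculus[OF ab deriv])
  then have "(g has_integral f b - f a) (cbox a b)"
    unfolding cbox_interval by (rule has_integral_spike[OF N, rotated]) (auto simp: g_def)
  then have "norm (f b - f a) \<le> B * measure lborel (cbox a b)"
    by (rule has_integral_bound[OF B]) (use B bound in \<open>auto simp: g_def cbox_interval\<close>)
  then show ?thesis using ab by simp
qed

locale decreasing_majorant =
  fixes W :: "real \<Rightarrow> real"
  assumes W_pos: "\<forall>s\<ge>0. W s > 0"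
    and W_int: "set_integrable lborel {0..} W"
    and W_decr: "antimono_on {0..} W"
begin

lemma W_antimono: "0 \<le> s \<Longrightarrow> s \<le> t \<Longrightarrow> W t \<le> W s"
  using W_decr by (auto simp: monotone_on_def)

lemma W_gt_0: "0 \<le> s \<Longrightarrow> 0 < W s"
  using W_pos by auto

definition moment :: "nat \<Rightarrow> real" where
  "moment n = integral {0..} (\<lambda>s. s ^ n * W s)"

definition partial_moment :: "nat \<Rightarrow> real \<Rightarrow> real" where
  "partial_moment n t = integral {0..t} (\<lambda>s. s ^ n * W s)"

lemma moment_nonneg: "0 \<le> moment n"
  unfolding moment_def
  by (cases "(\<lambda>s. s ^ n * W s) integrable_on {0..}")
    (auto simp: not_integrable_integral intro!: integral_nonneg mult_nonneg_nonneg
          less_imp_le[OF W_gt_0])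

context
  fixes n :: nat
  assumes moment_finite: "set_integrable lborel {0..} (\<lambda>s. s ^ n * W s)"
begin

lemma power_mult_W_integrable_on:
  "S \<in> sets lborel \<Longrightarrow> S \<subseteq> {0..} \<Longrightarrow> (\<lambda>s. s ^ n * W s) integrable_on S"
  using set_borel_integral_eq_integral(1)[OF set_integrable_subset[OF moment_finite]] by auto

lemma partial_moment_diff:
  "0 \<le> s \<Longrightarrow> s \<le> t \<Longrightarrow>
     partial_moment n t - partial_moment n s = integral {s..t} (\<lambda>s. s ^ n * W s)"
  unfolding partial_moment_def
  using Henstock_Kurzweil_Integration.integral_combine[of 0 s t "\<lambda>s. s ^ n * W s"]
    power_mult_W_integrable_on[of "{0..t}"] by auto

lemma integral_power_mult_W_ge:
  assumes "0 \<le> s" "s \<le> t"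
  shows "(t - s) * (s ^ n * W t) \<le> integral {s..t} (\<lambda>s. s ^ n * W s)"
proof -
  have "integral {s..t} (\<lambda>_. s ^ n * W t) \<le> integral {s..t} (\<lambda>s. s ^ n * W s)"
    by (rule integral_le)
      (use assms in \<open>auto intro!: power_mult_W_integrable_on mult_mono power_mono
                      W_antimono less_imp_le[OF W_gt_0]\<close>)
  then show ?thesis using assms by (simp add: mult_ac)
qed

lemma partial_moment_mono: "0 \<le> s \<Longrightarrow> s \<le> t \<Longrightarrow> partial_moment n s \<le> partial_moment n t"
  using partial_moment_diff[of s t] integral_power_mult_W_ge[of s t] W_gt_0[of t]
  by (smt (verit) mult_nonneg_nonneg zero_le_power)

lemma partial_moment_nonneg: "0 \<le> t \<Longrightarrow> 0 \<le> partial_moment n t"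
  using partial_moment_mono[of 0 t] by (simp add: partial_moment_def)

lemma partial_moment_le_moment: "0 \<le> t \<Longrightarrow> partial_moment n t \<le> moment n"
  unfolding partial_moment_def moment_def
  by (rule integral_subset_le)
    (auto intro!: power_mult_W_integrable_on mult_nonneg_nonneg less_imp_le[OF W_gt_0])

lemma power_mult_W_le_partial_moment_diff:
  assumes "0 \<le> s"
  shows "s ^ (n + 1) * W s \<le> 2 ^ (n + 1) * (partial_moment n s - partial_moment n (s / 2))"
proof -
  have "(s / 2) ^ (n + 1) * W s = (s - s / 2) * ((s / 2) ^ n * W s)"
    by simp
  also have "\<dots> \<le> partial_moment n s - partial_moment n (s / 2)"
    using assms integral_power_mult_W_ge[of "s / 2" s] partial_moment_diff[of "s / 2" s] by simp
  finally show ?thesis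
    by (simp add: power_divide field_simps)
qed

end

lemma W_moment_0_finite: "set_integrable lborel {0..} (\<lambda>s. s ^ 0 * W s)"
  using W_int by simp

lemma sum_W_le_partial_moment: "(\<Sum>i\<in>{1..N}. W (real i)) \<le> partial_moment 0 (real N)"
proof (induction N)
  case 0
  then show ?case by (simp add: partial_moment_def)
next
  case (Suc N)
  have "W (real N + 1) \<le> partial_moment 0 (real N + 1) - partial_moment 0 (real N)"
    using integral_power_mult_W_ge[OF W_moment_0_finite, of "real N" "real N + 1"]
      partial_moment_diff[OF W_moment_0_finite, of "real N" "real N + 1"] by simp
  then show ?case using Suc by (simp add: add.commute)
qed

lemma sum_W_lessThan_le: "(\<Sum>i<N. W (real i)) \<le> W 0 + moment 0"
proof (cases N)
  case 0
  then show ?thesis using W_gt_0[of 0] moment_nonneg[of 0] by simp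
next
  case (Suc M)
  have "(\<Sum>i<N. W (real i)) = W 0 + (\<Sum>i\<in>{1..M}. W (real i))"
    unfolding Suc lessThan_Suc_atMost atMost_atLeast0 by (simp add: sum.atLeast_Suc_atMost)
  then show ?thesis
    using sum_W_le_partial_moment[of M] partial_moment_le_moment[OF W_moment_0_finite, of "real M"]
    by simp
qed

text \<open>Unlike \<open>W\<close> itself, the envelope will bound a majorised differentiable function
  everywhere, together with its increments over steps of length at most one.\<close>

definition envelope :: "real \<Rightarrow> real" where
  "envelope s = 2 * W (max (s - 1) 0)"

definition lattice_bound :: real where
  "lattice_bound = 4 * (2 * W 0 + moment 0)"

definition pair_decay :: "real \<Rightarrow> real" where
  "pair_decay D = min (envelope 0) (2 * envelope D)"

lemma envelope_pos: "0 < envelope s"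
  unfolding envelope_def using W_gt_0[of "max (s - 1) 0"] by simp

lemma envelope_antimono: "0 \<le> s \<Longrightarrow> s \<le> t \<Longrightarrow> envelope t \<le> envelope s"
  unfolding envelope_def by (auto intro!: W_antimono)

lemma lattice_bound_pos: "0 < lattice_bound"
  unfolding lattice_bound_def using W_gt_0[of 0] moment_nonneg[of 0] by simp

lemma pair_decay_nonneg: "0 \<le> pair_decay D"
  unfolding pair_decay_def using envelope_pos[of 0] envelope_pos[of D] by simp

lemma pair_decay_antimono: "0 \<le> s \<Longrightarrow> s \<le> t \<Longrightarrow> pair_decay t \<le> pair_decay s"
  unfolding pair_decay_def using envelope_antimono[of s t] by linarith

lemma pair_decay_le_W: "2 \<le> t \<Longrightarrow> pair_decay t \<le> 4 * W (t / 2)"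
  unfolding pair_decay_def envelope_def
  using W_antimono[of "t / 2" "t - 1"] by (simp add: max_def)

lemma sum_envelope_lessThan_le: "(\<Sum>i<N. envelope (real i)) \<le> lattice_bound / 2"
proof (cases N)
  case 0
  then show ?thesis using lattice_bound_pos by simp
next
  case (Suc M)
  have "(\<Sum>i<N. envelope (real i)) = envelope 0 + 2 * (\<Sum>i<M. W (real i))"
    unfolding Suc sum.lessThan_Suc_shift by (simp add: envelope_def sum_distrib_left)
  then show ?thesis
    using sum_W_lessThan_le[of M] by (simp add: envelope_def lattice_bound_def)
qed

lemma sum_envelope_le_inj_nat:
  fixes g :: "'a \<Rightarrow> nat"
  assumes "finite K" "inj_on g K" "\<And>k. k \<in> K \<Longrightarrow> envelope (a k) \<le> envelope (real (g k))"
  shows "(\<Sum>k\<in>K. envelope (a k)) \<le> lattice_bound / 2"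
proof -
  have "(\<Sum>k\<in>K. envelope (a k)) \<le> (\<Sum>k\<in>K. envelope (real (g k)))"
    by (rule sum_mono) (rule assms(3))
  also have "\<dots> = (\<Sum>i\<in>g ` K. envelope (real i))"
    by (simp add: sum.reindex[OF assms(2)])
  also have "\<dots> \<le> (\<Sum>i<Suc (Max (g ` K)). envelope (real i))"
    by (rule sum_mono2)
      (use assms(1) in \<open>auto simp: less_Suc_eq_le intro: less_imp_le[OF envelope_pos]\<close>)
  also have "\<dots> \<le> lattice_bound / 2"
    by (rule sum_envelope_lessThan_le)
  finally show ?thesis .
qed

lemma sum_envelope_lattice_le:
  assumes "finite K"
  shows "(\<Sum>k\<in>K. envelope \<bar>u - of_int k\<bar>) \<le> lattice_bound"
proof -
  let ?above = "{k\<in>K. u \<le> of_int k}" and ?below = "{k\<in>K. \<not> u \<le> of_int k}"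
  have "(\<Sum>k\<in>?above. envelope \<bar>u - of_int k\<bar>) \<le> lattice_bound / 2"
  proof (rule sum_envelope_le_inj_nat[where g = "\<lambda>k. nat (k - \<lceil>u\<rceil>)"])
    show "inj_on (\<lambda>k. nat (k - \<lceil>u\<rceil>)) ?above"
      by (rule inj_onI) (auto simp: ceiling_le_iff eq_nat_nat_iff)
    show "envelope \<bar>u - of_int k\<bar> \<le> envelope (real (nat (k - \<lceil>u\<rceil>)))" if "k \<in> ?above" for k
      using that le_of_int_ceiling[of u] by (intro envelope_antimono) (auto simp: ceiling_le_iff)
  qed (use assms in auto)
  moreover have "(\<Sum>k\<in>?below. envelope \<bar>u - of_int k\<bar>) \<le> lattice_bound / 2"
  proof (rule sum_envelope_le_inj_nat[where g = "\<lambda>k. nat (\<lfloor>u\<rfloor> - k)"])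
    show "inj_on (\<lambda>k. nat (\<lfloor>u\<rfloor> - k)) ?below"
      by (rule inj_onI) (auto simp: le_floor_iff eq_nat_nat_iff)
    show "envelope \<bar>u - of_int k\<bar> \<le> envelope (real (nat (\<lfloor>u\<rfloor> - k)))" if "k \<in> ?below" for k
      using that of_int_floor_le[of u] by (intro envelope_antimono) (auto simp: le_floor_iff)
  qed (use assms in auto)
  moreover have "(\<Sum>k\<in>K. envelope \<bar>u - of_int k\<bar>)
      = (\<Sum>k\<in>?above. envelope \<bar>u - of_int k\<bar>) + (\<Sum>k\<in>?below. envelope \<bar>u - of_int k\<bar>)"
    using assms by (subst sum.union_disjoint[symmetric]) (auto intro!: sum.cong)
  ultimately show ?thesis by simp
qed

text \<open>For each translate one of the two factors is evaluated at distance at least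
  \<open>\<bar>u - v\<bar> / 2\<close>, which gives the second bound in \<open>pair_decay\<close>.\<close>

lemma sum_envelope_pair_le:
  assumes "finite K"
  shows "(\<Sum>k\<in>K. envelope \<bar>u - of_int k\<bar> * envelope \<bar>v - of_int k\<bar>)
         \<le> lattice_bound * pair_decay (\<bar>u - v\<bar> / 2)"
proof -
  let ?D = "\<bar>u - v\<bar> / 2"
  let ?eu = "\<lambda>k. envelope \<bar>u - of_int k\<bar>" and ?ev = "\<lambda>k. envelope \<bar>v - of_int k\<bar>"
  have "(\<Sum>k\<in>K. ?eu k * ?ev k) \<le> (\<Sum>k\<in>K. envelope 0 * ?ev k)"
    by (intro sum_mono mult_right_mono envelope_antimono) (auto intro: less_imp_le[OF envelope_pos])
  also have "\<dots> \<le> envelope 0 * lattice_bound"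
    unfolding sum_distrib_left[symmetric]
    using sum_envelope_lattice_le[OF assms, of v] envelope_pos[of 0] by simp
  finally have near: "(\<Sum>k\<in>K. ?eu k * ?ev k) \<le> lattice_bound * envelope 0"
    by (simp add: mult.commute)
  have "?eu k * ?ev k \<le> envelope ?D * (?eu k + ?ev k)" for k
  proof -
    have "\<bar>u - v\<bar> \<le> \<bar>u - of_int k\<bar> + \<bar>v - of_int k\<bar>"
      by linarith
    then have "envelope ?D \<ge> ?eu k \<or> envelope ?D \<ge> ?ev k"
      by (smt (verit) abs_ge_zero envelope_antimono field_sum_of_halves)
    then show ?thesis
      using envelope_pos[of "\<bar>u - of_int k\<bar>"] envelope_pos[of "\<bar>v - of_int k\<bar>"]
      by (smt (verit) distrib_left mult_right_mono mult.commute mult_left_mono)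
  qed
  then have "(\<Sum>k\<in>K. ?eu k * ?ev k) \<le> envelope ?D * ((\<Sum>k\<in>K. ?eu k) + (\<Sum>k\<in>K. ?ev k))"
    by (simp add: sum_mono sum.distrib[symmetric] sum_distrib_left)
  also have "\<dots> \<le> envelope ?D * (2 * lattice_bound)"
    using sum_envelope_lattice_le[OF assms, of u] sum_envelope_lattice_le[OF assms, of v]
      envelope_pos[of ?D] by (intro mult_left_mono) auto
  finally have far: "(\<Sum>k\<in>K. ?eu k * ?ev k) \<le> lattice_bound * (2 * envelope ?D)"
    by (simp add: mult_ac)
  show ?thesis
    using near far unfolding pair_decay_def by (simp add: min_def)
qed

lemma sum_envelope_pair_le_far:
  assumes "finite K" "0 < a" "\<bar>p - r\<bar> / 2 \<le> \<bar>z - r\<bar>"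
  shows "(\<Sum>k\<in>K. envelope \<bar>a * z - of_int k\<bar> * envelope \<bar>a * r - of_int k\<bar>)
         \<le> lattice_bound * pair_decay (a * (\<bar>p - r\<bar> / 4))"
proof -
  have "a * (\<bar>p - r\<bar> / 4) \<le> \<bar>a * z - a * r\<bar> / 2"
    using assms(2,3) by (simp add: right_diff_distrib[symmetric] abs_mult)
  then have "lattice_bound * pair_decay (\<bar>a * z - a * r\<bar> / 2)
      \<le> lattice_bound * pair_decay (a * (\<bar>p - r\<bar> / 4))"
    using assms(2) lattice_bound_pos by (intro mult_left_mono pair_decay_antimono) auto
  then show ?thesis
    using sum_envelope_pair_le[OF assms(1), of "a * z" "a * r"] by linarith
qed

lemma sum_dyadic_pair_decay_small_le:
  assumes e: "0 < e" and fin: "finite J" and small: "\<And>j. j \<in> J \<Longrightarrow> 2 powr of_int j * e \<le> 2"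
  shows "(\<Sum>j\<in>J. (2 powr of_int j) ^ (n + 1) * pair_decay (2 powr of_int j * e))
         \<le> 2 ^ (n + 2) * envelope 0 / e ^ (n + 1)"
proof -
  have "(\<Sum>j\<in>J. (2 powr of_int j) ^ (n + 1) * pair_decay (2 powr of_int j * e))
      \<le> (\<Sum>j\<in>J. (2 powr of_int j) ^ (n + 1)) * envelope 0"
    unfolding sum_distrib_right by (intro sum_mono mult_left_mono) (auto simp: pair_decay_def)
  also have "\<dots> \<le> (2 * (2 / e) ^ (n + 1)) * envelope 0"
    using e small envelope_pos[of 0]
    by (intro mult_right_mono sum_dyadic_powers_le fin) (auto simp: field_simps)
  finally show ?thesis
    by (simp add: power_divide field_simps)
qed

text \<open>For \<open>2 powr j * e > 2\<close> the term is controlled by the increment of the partial moment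
  over a dyadic interval, and these increments telescope.\<close>

lemma sum_dyadic_pair_decay_large_le:
  assumes moment_finite: "set_integrable lborel {0..} (\<lambda>s. s ^ n * W s)"
    and e: "0 < e" and fin: "finite J" and large: "\<And>j. j \<in> J \<Longrightarrow> 2 < 2 powr of_int j * e"
  shows "(\<Sum>j\<in>J. (2 powr of_int j) ^ (n + 1) * pair_decay (2 powr of_int j * e))
         \<le> 4 ^ (n + 2) * moment n / e ^ (n + 1)"
proof -
  let ?incr = "\<lambda>j. partial_moment n (2 powr of_int j * (e / 2))
                   - partial_moment n (2 powr of_int j * (e / 2) / 2)"
  have "(2 powr of_int j) ^ (n + 1) * pair_decay (2 powr of_int j * e)
      \<le> 4 ^ (n + 2) / e ^ (n + 1) * ?incr j" if "j \<in> J" for j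
  proof -
    define a :: real where "a = 2 powr of_int j"
    have a: "0 < a" "2 < a * e" using large[OF that] by (auto simp: a_def)
    have "a ^ (n + 1) = (2 / e) ^ (n + 1) * (a * e / 2) ^ (n + 1)"
      using e by (simp add: power_mult_distrib[symmetric])
    then have "a ^ (n + 1) * pair_decay (a * e)
        \<le> 4 * (2 / e) ^ (n + 1) * ((a * e / 2) ^ (n + 1) * W (a * e / 2))"
      using a e pair_decay_le_W[of "a * e"] by (simp add: mult_left_mono mult_ac)
    also have "\<dots> \<le> 4 * (2 / e) ^ (n + 1) * (2 ^ (n + 1) * ?incr j)"
      using a e power_mult_W_le_partial_moment_diff[OF moment_finite, of "a * e / 2"]
      by (intro mult_left_mono) (auto simp: a_def algebra_simps)
    also have "\<dots> = 4 ^ (n + 2) / e ^ (n + 1) * ?incr j"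
      by (simp add: power_divide power_mult_distrib[symmetric])
    finally show ?thesis by (simp add: a_def)
  qed
  then have "(\<Sum>j\<in>J. (2 powr of_int j) ^ (n + 1) * pair_decay (2 powr of_int j * e))
      \<le> 4 ^ (n + 2) / e ^ (n + 1) * (\<Sum>j\<in>J. ?incr j)"
    unfolding sum_distrib_left by (rule sum_mono)
  also have "\<dots> \<le> 4 ^ (n + 2) / e ^ (n + 1) * moment n"
    using e fin
    by (intro mult_left_mono sum_dyadic_increments_le)
      (auto intro: partial_moment_mono[OF moment_finite] partial_moment_nonneg[OF moment_finite]
         partial_moment_le_moment[OF moment_finite])
  finally show ?thesis by simp
qed

lemma sum_dyadic_pair_decay_le:
  assumes moment_finite: "set_integrable lborel {0..} (\<lambda>s. s ^ n * W s)"
    and e: "0 < e" and fin: "finite J"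
  shows "(\<Sum>j\<in>J. (2 powr of_int j) ^ (n + 1) * pair_decay (2 powr of_int j * e))
         \<le> (2 ^ (n + 2) * envelope 0 + 4 ^ (n + 2) * moment n) / e ^ (n + 1)"
proof -
  let ?f = "\<lambda>j. (2 powr of_int j) ^ (n + 1) * pair_decay (2 powr of_int j * e)"
  let ?small = "{j\<in>J. 2 powr of_int j * e \<le> 2}" and ?large = "{j\<in>J. \<not> 2 powr of_int j * e \<le> 2}"
  have "(\<Sum>j\<in>J. ?f j) = (\<Sum>j\<in>?small. ?f j) + (\<Sum>j\<in>?large. ?f j)"
    using fin by (subst sum.union_disjoint[symmetric]) (auto intro!: sum.cong)
  also have "\<dots> \<le> 2 ^ (n + 2) * envelope 0 / e ^ (n + 1) + 4 ^ (n + 2) * moment n / e ^ (n + 1)"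
    using fin e
    by (intro add_mono sum_dyadic_pair_decay_small_le sum_dyadic_pair_decay_large_le moment_finite) auto
  finally show ?thesis
    by (simp add: add_divide_distrib)
qed

definition kernel_size_bound :: real where
  "kernel_size_bound = 2 * lattice_bound * (4 * envelope 0 + 16 * moment 0)"

definition kernel_smoothness_bound :: real where
  "kernel_smoothness_bound = 32 * lattice_bound * (8 * envelope 0 + 64 * moment 1)"

lemma kernel_size_bound_pos: "0 < kernel_size_bound"
  unfolding kernel_size_bound_def
  using lattice_bound_pos envelope_pos[of 0] moment_nonneg[of 0] by simp

lemma kernel_smoothness_bound_pos: "0 < kernel_smoothness_bound"
  unfolding kernel_smoothness_bound_def
  using lattice_bound_pos envelope_pos[of 0] moment_nonneg[of 1] by simp

end

lemma norm_wav_mult: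
  "cmod (wav \<psi> j k x) * cmod (wav \<psi> j k y) =
     2 powr of_int j * (cmod (\<psi> (2 powr of_int j * x - of_int k)) * cmod (\<psi> (2 powr of_int j * y - of_int k)))"
proof -
  have "2 powr (of_int j / 2) * 2 powr (of_int j / 2) = (2::real) powr of_int j"
    by (simp add: powr_add[symmetric])
  then show ?thesis by (simp add: wav_def norm_mult mult_ac)
qed

lemma norm_wav_diff_mult:
  "cmod (wav \<psi> j k q - wav \<psi> j k p) * cmod (wav \<psi> j k r) =
     2 powr of_int j * (cmod (\<psi> (2 powr of_int j * q - of_int k) - \<psi> (2 powr of_int j * p - of_int k))
                        * cmod (\<psi> (2 powr of_int j * r - of_int k)))"
proof -
  have "2 powr (of_int j / 2) * 2 powr (of_int j / 2) = (2::real) powr of_int j"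
    by (simp add: powr_add[symmetric])
  then show ?thesis by (simp add: wav_def norm_mult mult_ac right_diff_distrib[symmetric])
qed

locale majorised_differentiable = decreasing_majorant +
  fixes \<psi> \<psi>' :: "real \<Rightarrow> complex"
  assumes psi_derivative: "\<And>x. (\<psi> has_vector_derivative \<psi>' x) (at x)"
    and majorised: "AE x in lborel. cmod (\<psi> x) \<le> W \<bar>x\<bar>"
    and derivative_majorised: "AE x in lborel. cmod (\<psi>' x) \<le> W \<bar>x\<bar>"
begin

lemma norm_increment_le:
  assumes h: "\<bar>h\<bar> \<le> 1"
  shows "cmod (\<psi> (t + h) - \<psi> t) \<le> \<bar>h\<bar> * W (max (\<bar>t\<bar> - 1) 0)"
proof -
  obtain N where N: "negligible N" "\<And>x. x \<notin> N \<Longrightarrow> cmod (\<psi>' x) \<le> W \<bar>x\<bar>"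
    using AE_lborel_negligibleE[OF derivative_majorised] by blast
  let ?a = "min t (t + h)" and ?b = "max t (t + h)"
  have "cmod (\<psi> ?b - \<psi> ?a) \<le> W (max (\<bar>t\<bar> - 1) 0) * (?b - ?a)"
  proof (rule norm_increment_le_ae_deriv_bound[OF _ _ _ N(1)])
    show "W (max (\<bar>t\<bar> - 1) 0) \<ge> 0" using W_gt_0[of "max (\<bar>t\<bar> - 1) 0"] by simp
    show "(\<psi> has_vector_derivative \<psi>' x) (at x within {?a..?b})" for x
      using psi_derivative by (rule has_vector_derivative_at_within)
    show "cmod (\<psi>' x) \<le> W (max (\<bar>t\<bar> - 1) 0)" if "x \<in> {?a..?b}" "x \<notin> N" for x
    proof -
      have "max (\<bar>t\<bar> - 1) 0 \<le> \<bar>x\<bar>" using that(1) h by auto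
      then have "W \<bar>x\<bar> \<le> W (max (\<bar>t\<bar> - 1) 0)" by (intro W_antimono) auto
      then show ?thesis using N(2)[OF that(2)] by linarith
    qed
  qed simp
  then show ?thesis
    by (cases "0 \<le> h") (auto simp: norm_minus_commute mult.commute)
qed

lemma norm_increment_le_envelope:
  "\<bar>h\<bar> \<le> 1 \<Longrightarrow> cmod (\<psi> (t + h) - \<psi> t) \<le> \<bar>h\<bar> * envelope \<bar>t\<bar>"
  using norm_increment_le[of h t] W_gt_0[of "max (\<bar>t\<bar> - 1) 0"]
  unfolding envelope_def by (smt (verit) abs_ge_zero mult_left_mono)

text \<open>The a.e.\ bound is transferred to every point \<open>t\<close> through a nearby good point
  \<open>s\<close> farther from the origin, using the increment bound.\<close>

lemma norm_le_envelope: "cmod (\<psi> t) \<le> envelope \<bar>t\<bar>"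
proof -
  obtain N where N: "negligible N" "\<And>x. x \<notin> N \<Longrightarrow> cmod (\<psi> x) \<le> W \<bar>x\<bar>"
    using AE_lborel_negligibleE[OF majorised] by blast
  define I where "I = (if 0 \<le> t then {t<..<t+1} else {t-1<..<t})"
  have "\<not> negligible I"
    unfolding I_def by (auto simp: negligible_interval(2)[of _ "_::real", unfolded box_real])
  then obtain s where s: "s \<in> I" "s \<notin> N"
    using N(1) negligible_subset by blast
  have st: "\<bar>t\<bar> \<le> \<bar>s\<bar>" "\<bar>t - s\<bar> \<le> 1" using s(1) by (auto simp: I_def split: if_splits)
  let ?w = "W (max (\<bar>t\<bar> - 1) 0)"
  have "cmod (\<psi> t) \<le> cmod (\<psi> s) + cmod (\<psi> (s + (t - s)) - \<psi> s)"
    by (simp add: norm_triangle_sub)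
  also have "\<dots> \<le> W \<bar>s\<bar> + \<bar>t - s\<bar> * W (max (\<bar>s\<bar> - 1) 0)"
    using N(2)[OF s(2)] norm_increment_le[OF st(2), of s] by linarith
  also have "\<dots> \<le> ?w + 1 * ?w"
    using st W_gt_0[of "max (\<bar>s\<bar> - 1) 0"]
    by (intro add_mono mult_mono W_antimono) auto
  finally show ?thesis by (simp add: envelope_def)
qed

lemma sum_translates_le:
  assumes "finite K"
  shows "(\<Sum>k\<in>K. cmod (wav \<psi> j k x) * cmod (wav \<psi> j k y))
         \<le> 2 powr of_int j * (lattice_bound * pair_decay (2 powr of_int j * (\<bar>x - y\<bar> / 2)))"
proof -
  define a :: real where "a = 2 powr of_int j"
  have a: "0 < a" by (simp add: a_def)
  have "(\<Sum>k\<in>K. cmod (wav \<psi> j k x) * cmod (wav \<psi> j k y))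
      \<le> (\<Sum>k\<in>K. a * (envelope \<bar>a * x - of_int k\<bar> * envelope \<bar>a * y - of_int k\<bar>))"
    unfolding norm_wav_mult a_def[symmetric] using a
    by (intro sum_mono mult_left_mono mult_mono norm_le_envelope)
      (auto intro: less_imp_le[OF envelope_pos])
  also have "\<dots> \<le> a * (lattice_bound * pair_decay (\<bar>a * x - a * y\<bar> / 2))"
    unfolding sum_distrib_left[symmetric] using a
    by (intro mult_left_mono sum_envelope_pair_le assms) auto
  also have "\<bar>a * x - a * y\<bar> / 2 = a * (\<bar>x - y\<bar> / 2)"
    using a by (simp add: right_diff_distrib[symmetric] abs_mult)
  finally show ?thesis by (simp add: a_def)
qed

lemma sum_translates_diff_le_fine:
  assumes K: "finite K" and fine: "2 powr of_int j * \<bar>q - p\<bar> \<le> 1"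
  shows "(\<Sum>k\<in>K. cmod (wav \<psi> j k q - wav \<psi> j k p) * cmod (wav \<psi> j k r))
         \<le> (2 powr of_int j)\<^sup>2 * \<bar>q - p\<bar> *
           (lattice_bound * pair_decay (2 powr of_int j * (\<bar>p - r\<bar> / 4)))"
proof -
  define a :: real where "a = 2 powr of_int j"
  have a: "0 < a" by (simp add: a_def)
  let ?e = "\<lambda>z k. envelope \<bar>a * z - of_int k\<bar>"
  have "cmod (\<psi> (a * q - of_int k) - \<psi> (a * p - of_int k)) \<le> a * \<bar>q - p\<bar> * ?e p k" for k
  proof -
    have h: "\<bar>a * (q - p)\<bar> \<le> 1" using fine a by (simp add: a_def abs_mult)
    have shift: "a * q - of_int k = (a * p - of_int k) + a * (q - p)"
      by (simp add: algebra_simps)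
    have "cmod (\<psi> (a * q - of_int k) - \<psi> (a * p - of_int k)) \<le> \<bar>a * (q - p)\<bar> * ?e p k"
      unfolding shift by (rule norm_increment_le_envelope[OF h])
    then show ?thesis using a by (simp add: abs_mult)
  qed
  then have "(\<Sum>k\<in>K. cmod (wav \<psi> j k q - wav \<psi> j k p) * cmod (wav \<psi> j k r))
      \<le> (\<Sum>k\<in>K. a * (a * \<bar>q - p\<bar> * ?e p k * ?e r k))"
    unfolding norm_wav_diff_mult a_def[symmetric] using a
    by (intro sum_mono mult_left_mono mult_mono norm_le_envelope)
      (auto intro!: mult_nonneg_nonneg less_imp_le[OF envelope_pos])
  also have "\<dots> = a\<^sup>2 * \<bar>q - p\<bar> * (\<Sum>k\<in>K. ?e p k * ?e r k)"
    by (simp add: sum_distrib_left power2_eq_square mult_ac)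
  also have "\<dots> \<le> a\<^sup>2 * \<bar>q - p\<bar> * (lattice_bound * pair_decay (a * (\<bar>p - r\<bar> / 4)))"
    using a by (intro mult_left_mono sum_envelope_pair_le_far K) auto
  finally show ?thesis by (simp add: a_def)
qed

lemma sum_translates_diff_le_coarse:
  assumes K: "finite K" and coarse: "1 < 2 powr of_int j * \<bar>q - p\<bar>"
    and qp: "\<bar>q - p\<bar> \<le> \<bar>p - r\<bar> / 2"
  shows "(\<Sum>k\<in>K. cmod (wav \<psi> j k q - wav \<psi> j k p) * cmod (wav \<psi> j k r))
         \<le> 2 * (2 powr of_int j)\<^sup>2 * \<bar>q - p\<bar> *
           (lattice_bound * pair_decay (2 powr of_int j * (\<bar>p - r\<bar> / 4)))"
proof -
  define a :: real where "a = 2 powr of_int j"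
  have a: "0 < a" by (simp add: a_def)
  let ?e = "\<lambda>z k. envelope \<bar>a * z - of_int k\<bar>"
  let ?P = "lattice_bound * pair_decay (a * (\<bar>p - r\<bar> / 4))"
  have "cmod (\<psi> (a * q - of_int k) - \<psi> (a * p - of_int k)) \<le> ?e q k + ?e p k" for k
    using norm_triangle_ineq4 norm_le_envelope by (smt (verit))
  then have "(\<Sum>k\<in>K. cmod (wav \<psi> j k q - wav \<psi> j k p) * cmod (wav \<psi> j k r))
      \<le> (\<Sum>k\<in>K. a * ((?e q k + ?e p k) * ?e r k))"
    unfolding norm_wav_diff_mult a_def[symmetric] using a
    by (intro sum_mono mult_left_mono mult_mono norm_le_envelope)
      (auto intro: add_nonneg_nonneg less_imp_le[OF envelope_pos])
  also have "\<dots> = a * ((\<Sum>k\<in>K. ?e q k * ?e r k) + (\<Sum>k\<in>K. ?e p k * ?e r k))"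
    by (simp add: sum.distrib[symmetric] sum_distrib_left algebra_simps)
  also have "\<dots> \<le> 2 * a * ?P"
  proof -
    have "\<bar>p - r\<bar> / 2 \<le> \<bar>q - r\<bar>" using qp by argo
    then show ?thesis
      using a sum_envelope_pair_le_far[OF K a, of p r q] sum_envelope_pair_le_far[OF K a, of p r p]
      by simp
  qed
  also have "\<dots> \<le> 2 * a * (a * \<bar>q - p\<bar> * ?P)"
    using coarse a lattice_bound_pos pair_decay_nonneg
      mult_right_mono[of 1 "a * \<bar>q - p\<bar>" ?P] by (simp add: a_def)
  finally show ?thesis by (simp add: a_def power2_eq_square mult_ac)
qed

lemma sum_translates_diff_le:
  assumes K: "finite K" and qp: "\<bar>q - p\<bar> \<le> \<bar>p - r\<bar> / 2"
  shows "(\<Sum>k\<in>K. cmod (wav \<psi> j k q - wav \<psi> j k p) * cmod (wav \<psi> j k r))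
         \<le> 2 * (2 powr of_int j)\<^sup>2 * \<bar>q - p\<bar> *
           (lattice_bound * pair_decay (2 powr of_int j * (\<bar>p - r\<bar> / 4)))"
proof (cases "2 powr of_int j * \<bar>q - p\<bar> \<le> 1")
  case True
  have "0 \<le> (2 powr of_int j)\<^sup>2 * \<bar>q - p\<bar> *
      (lattice_bound * pair_decay (2 powr of_int j * (\<bar>p - r\<bar> / 4)))"
    using lattice_bound_pos pair_decay_nonneg by simp
  then show ?thesis using sum_translates_diff_le_fine[OF K True, of r] by linarith
next
  case False
  then show ?thesis using sum_translates_diff_le_coarse[OF K _ qp] by simp
qed

lemma norm_infsum_translates_le:
  assumes xy: "x \<noteq> y"
    and g: "\<And>j k. cmod (g (j, k)) \<le> cmod (wav \<psi> j k x) * cmod (wav \<psi> j k y)"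
  shows "g summable_on UNIV" "cmod (infsum g UNIV) \<le> kernel_size_bound / \<bar>x - y\<bar>"
proof -
  define d where "d = \<bar>x - y\<bar>"
  have d: "0 < d" using xy by (simp add: d_def)
  let ?b = "\<lambda>j. 2 powr of_int j * (lattice_bound * pair_decay (2 powr of_int j * (d / 2)))"
  have inner: "(\<Sum>k\<in>K. cmod (g (j, k))) \<le> ?b j" if "finite K" for j K
    using sum_mono[of K "\<lambda>k. cmod (g (j, k))", OF g] sum_translates_le[OF that, of j x y]
    unfolding d_def by linarith
  have outer: "(\<Sum>j\<in>J. ?b j) \<le> kernel_size_bound / \<bar>x - y\<bar>" if "finite J" for J
  proof -
    have dyadic: "(\<Sum>j\<in>J. 2 powr of_int j * pair_decay (2 powr of_int j * (d / 2)))
        \<le> (4 * envelope 0 + 16 * moment 0) / (d / 2)"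
      using sum_dyadic_pair_decay_le[OF W_moment_0_finite, of "d / 2" J] d that by simp
    have "(\<Sum>j\<in>J. ?b j)
        = lattice_bound * (\<Sum>j\<in>J. 2 powr of_int j * pair_decay (2 powr of_int j * (d / 2)))"
      by (simp add: sum_distrib_left mult_ac)
    also have "\<dots> \<le> lattice_bound * ((4 * envelope 0 + 16 * moment 0) / (d / 2))"
      by (rule mult_left_mono[OF dyadic]) (use lattice_bound_pos in simp)
    also have "\<dots> = kernel_size_bound / \<bar>x - y\<bar>"
      using d by (simp add: kernel_size_bound_def d_def field_simps)
    finally show ?thesis .
  qed
  show "g summable_on UNIV" "cmod (infsum g UNIV) \<le> kernel_size_bound / \<bar>x - y\<bar>"
    using norm_infsum_le_iterated_sums[OF inner outer] by auto
qed

lemma norm_infsum_translates_diff_le: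
  assumes moment_1_finite: "set_integrable lborel {0..} (\<lambda>s. s * W s)"
    and pr: "p \<noteq> r" and qp: "\<bar>q - p\<bar> \<le> \<bar>p - r\<bar> / 2"
    and g: "\<And>j k. cmod (g (j, k)) \<le> cmod (wav \<psi> j k q - wav \<psi> j k p) * cmod (wav \<psi> j k r)"
  shows "g summable_on UNIV"
    "cmod (infsum g UNIV) \<le> kernel_smoothness_bound * \<bar>q - p\<bar> / \<bar>p - r\<bar>\<^sup>2"
proof -
  define d where "d = \<bar>p - r\<bar>"
  have d: "0 < d" using pr by (simp add: d_def)
  let ?b = "\<lambda>j. 2 * (2 powr of_int j)\<^sup>2 * \<bar>q - p\<bar> *
                 (lattice_bound * pair_decay (2 powr of_int j * (d / 4)))"
  have inner: "(\<Sum>k\<in>K. cmod (g (j, k))) \<le> ?b j" if "finite K" for j K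
    using sum_mono[of K "\<lambda>k. cmod (g (j, k))", OF g] sum_translates_diff_le[OF that qp, of j]
    unfolding d_def by linarith
  have outer: "(\<Sum>j\<in>J. ?b j) \<le> kernel_smoothness_bound * \<bar>q - p\<bar> / \<bar>p - r\<bar>\<^sup>2"
    if "finite J" for J
  proof -
    have dyadic: "(\<Sum>j\<in>J. (2 powr of_int j)\<^sup>2 * pair_decay (2 powr of_int j * (d / 4)))
        \<le> (8 * envelope 0 + 64 * moment 1) / (d / 4)\<^sup>2"
      using sum_dyadic_pair_decay_le[of 1 "d / 4" J] moment_1_finite d that
      by (simp add: numeral_eq_Suc)
    have "(\<Sum>j\<in>J. ?b j) = (2 * \<bar>q - p\<bar> * lattice_bound) *
        (\<Sum>j\<in>J. (2 powr of_int j)\<^sup>2 * pair_decay (2 powr of_int j * (d / 4)))"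
      by (simp add: sum_distrib_left mult_ac)
    also have "\<dots> \<le> (2 * \<bar>q - p\<bar> * lattice_bound) * ((8 * envelope 0 + 64 * moment 1) / (d / 4)\<^sup>2)"
      by (rule mult_left_mono[OF dyadic]) (use lattice_bound_pos in simp)
    also have "\<dots> = kernel_smoothness_bound * \<bar>q - p\<bar> / \<bar>p - r\<bar>\<^sup>2"
      using d by (simp add: kernel_smoothness_bound_def d_def field_simps power2_eq_square)
    finally show ?thesis .
  qed
  show "g summable_on UNIV" "cmod (infsum g UNIV) \<le> kernel_smoothness_bound * \<bar>q - p\<bar> / \<bar>p - r\<bar>\<^sup>2"
    using norm_infsum_le_iterated_sums[OF inner outer] by auto
qed

context
  fixes \<epsilon> :: "int \<Rightarrow> int \<Rightarrow> real"
  assumes signs_bounded: "\<And>j k. \<bar>\<epsilon> j k\<bar> \<le> 1"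
begin

lemma norm_wav_kernel_term_le:
  "cmod (complex_of_real (\<epsilon> j k) * wav \<psi> j k x * cnj (wav \<psi> j k y))
     \<le> cmod (wav \<psi> j k x) * cmod (wav \<psi> j k y)"
  using signs_bounded[of j k] by (simp add: norm_mult mult.assoc mult_left_le_one_le)

lemma wav_kernel_summable:
  "x \<noteq> y \<Longrightarrow>
     (\<lambda>(j, k). complex_of_real (\<epsilon> j k) * wav \<psi> j k x * cnj (wav \<psi> j k y)) summable_on UNIV"
  by (rule norm_infsum_translates_le(1)) (use norm_wav_kernel_term_le in auto)

lemma norm_wav_kernel_le:
  "x \<noteq> y \<Longrightarrow> cmod (wav_kernel \<psi> \<epsilon> x y) \<le> kernel_size_bound / \<bar>x - y\<bar>"
  unfolding wav_kernel_def
  by (rule norm_infsum_translates_le(2)) (use norm_wav_kernel_term_le in auto)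

lemma wav_kernel_diff_eq_infsum:
  assumes "x \<noteq> y" "x' \<noteq> y'"
  shows "wav_kernel \<psi> \<epsilon> x y - wav_kernel \<psi> \<epsilon> x' y' =
    (\<Sum>\<^sub>\<infinity>(j, k)\<in>UNIV. complex_of_real (\<epsilon> j k) *
       (wav \<psi> j k x * cnj (wav \<psi> j k y) - wav \<psi> j k x' * cnj (wav \<psi> j k y')))"
  unfolding wav_kernel_def
    infsum_diff[OF wav_kernel_summable[OF assms(1)] wav_kernel_summable[OF assms(2)], symmetric]
  by (rule infsum_cong) (auto simp: algebra_simps)

lemma norm_wav_kernel_diff_fst_le:
  assumes moment_1_finite: "set_integrable lborel {0..} (\<lambda>s. s * W s)"
    and xy: "x \<noteq> y" and zx: "\<bar>z - x\<bar> \<le> \<bar>x - y\<bar> / 2"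
  shows "cmod (wav_kernel \<psi> \<epsilon> z y - wav_kernel \<psi> \<epsilon> x y)
         \<le> kernel_smoothness_bound * \<bar>z - x\<bar> / \<bar>x - y\<bar>\<^sup>2"
proof -
  have "z \<noteq> y"
  proof
    assume "z = y"
    with zx have "\<bar>x - y\<bar> \<le> \<bar>x - y\<bar> / 2" by (simp add: abs_minus_commute)
    with xy show False by simp
  qed
  have "cmod (complex_of_real (\<epsilon> j k) *
          (wav \<psi> j k z * cnj (wav \<psi> j k y) - wav \<psi> j k x * cnj (wav \<psi> j k y)))
      \<le> cmod (wav \<psi> j k z - wav \<psi> j k x) * cmod (wav \<psi> j k y)" for j k
    using signs_bounded[of j k]
    by (simp add: norm_mult left_diff_distrib[symmetric] mult_left_le_one_le)
  then show ?thesis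
    unfolding wav_kernel_diff_eq_infsum[OF \<open>z \<noteq> y\<close> xy]
    by (intro norm_infsum_translates_diff_le(2)[OF moment_1_finite xy zx]) simp
qed

lemma norm_wav_kernel_diff_snd_le:
  assumes moment_1_finite: "set_integrable lborel {0..} (\<lambda>s. s * W s)"
    and xy: "x \<noteq> y" and wy: "\<bar>w - y\<bar> \<le> \<bar>x - y\<bar> / 2"
  shows "cmod (wav_kernel \<psi> \<epsilon> x w - wav_kernel \<psi> \<epsilon> x y)
         \<le> kernel_smoothness_bound * \<bar>w - y\<bar> / \<bar>x - y\<bar>\<^sup>2"
proof -
  have "x \<noteq> w"
  proof
    assume "x = w"
    with wy have "\<bar>x - y\<bar> \<le> \<bar>x - y\<bar> / 2" by simp
    with xy show False by simp
  qed
  have yx: "y \<noteq> x" "\<bar>w - y\<bar> \<le> \<bar>y - x\<bar> / 2" using xy wy by (auto simp: abs_minus_commute)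
  have "cmod (complex_of_real (\<epsilon> j k) *
          (wav \<psi> j k x * cnj (wav \<psi> j k w) - wav \<psi> j k x * cnj (wav \<psi> j k y)))
      \<le> cmod (wav \<psi> j k w - wav \<psi> j k y) * cmod (wav \<psi> j k x)" for j k
    using signs_bounded[of j k]
    by (simp add: norm_mult right_diff_distrib[symmetric] mult_left_le_one_le mult.commute
        del: complex_cnj_diff flip: complex_cnj_diff)
  then show ?thesis
    unfolding wav_kernel_diff_eq_infsum[OF \<open>x \<noteq> w\<close> xy] abs_minus_commute[of x y]
    by (intro norm_infsum_translates_diff_le(2)[OF moment_1_finite yx]) simp
qed

end

end

theorem theorem2p5:
  fixes W :: "real \<Rightarrow> real"
  assumes W_pos: "\<forall>s\<ge>0. W s > 0"
    and W_int: "set_integrable lborel {0..} W"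
    and W_decr: "antimono_on {0..} W"
    and W_moment: "set_integrable lborel {0..} (\<lambda>s. s * W s)"
  shows "\<exists>C1>0. \<exists>C2>0. \<exists>C3>0.
    \<forall>(\<psi> :: real \<Rightarrow> complex) \<psi>'.
      orthonormal_wavelet \<psi> \<and>
      (\<forall>x. (\<psi> has_vector_derivative \<psi>' x) (at x)) \<and>
      radial_decr_L1_majorant W \<psi> \<and> radial_decr_L1_majorant W \<psi>'
      \<longrightarrow>
      (\<forall>\<epsilon> :: int \<Rightarrow> int \<Rightarrow> real. (\<forall>j k. \<epsilon> j k \<in> {-1, 1}) \<longrightarrow>
         (\<forall>x y. x \<noteq> y \<longrightarrow>
            (\<lambda>(j, k). complex_of_real (\<epsilon> j k) * wav \<psi> j k x * cnj (wav \<psi> j k y))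
              summable_on UNIV) \<and>
         standard_kernel_with C1 C2 C3 (wav_kernel \<psi> \<epsilon>))"
proof -
  interpret decreasing_majorant W
    using W_pos W_int W_decr by unfold_locales
  have kernel: "(\<forall>x y. x \<noteq> y \<longrightarrow>
            (\<lambda>(j, k). complex_of_real (\<epsilon> j k) * wav \<psi> j k x * cnj (wav \<psi> j k y))
              summable_on UNIV) \<and>
         standard_kernel_with kernel_size_bound kernel_smoothness_bound kernel_smoothness_bound
           (wav_kernel \<psi> \<epsilon>)"
    if "\<forall>x. (\<psi> has_vector_derivative \<psi>' x) (at x)"
      and "radial_decr_L1_majorant W \<psi>" "radial_decr_L1_majorant W \<psi>'"
      and "\<forall>j k. \<epsilon> j k \<in> {-1, 1}"
    for \<psi> \<psi>' \<epsilon>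
  proof -
    interpret majorised_differentiable W \<psi> \<psi>'
      using that by unfold_locales (auto simp: radial_decr_L1_majorant_def)
    have signs: "\<bar>\<epsilon> j k\<bar> \<le> 1" for j k
      using that(4)[rule_format, of j k] by auto
    show ?thesis
      unfolding standard_kernel_with_def
      using wav_kernel_summable[where \<epsilon> = \<epsilon>, OF signs]
        norm_wav_kernel_le[where \<epsilon> = \<epsilon>, OF signs]
        norm_wav_kernel_diff_fst_le[where \<epsilon> = \<epsilon>, OF signs W_moment]
        norm_wav_kernel_diff_snd_le[where \<epsilon> = \<epsilon>, OF signs W_moment]
      by blast
  qed
  show ?thesis
    by (intro exI[of _ kernel_size_bound] exI[of _ kernel_smoothness_bound] allI impI
        conjI[OF kernel_size_bound_pos] conjI[OF kernel_smoothness_bound_pos])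
      (elim conjE, rule kernel, assumption+)
qed

end
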